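(* There exist preference-based argumentation frameworks $AF_p=(AR,Attacks,Prefs)$ and $AF'_p=(AR',Attacks',Prefs')$ with $AF_p\preceq_{RMP}AF'_p$ such that $\tau_{preferred}(AF'_p)\subseteq AR$ but $\tau_{preferred}(AF'_p)\neq\tau_{preferred}(AF_p)$.
   Context: A preference-based argumentation framework is a triple $(AR,Attacks,Prefs)$ where $AR$ is a finite set of arguments, $Attacks\subseteq AR\times AR$ (with $(b,a)\in Attacks$ read "$b$ attacks $a$"), and $Prefs$ is a partial or total ordering on $AR$, written $a\succeq b$. $\tau_{preferred}(AF_p)=\{a\in AR: \text{for every } b\in AR,\ (b,a)\in Attacks\text{ implies } a\succeq b\}$. $AF_p\preceq_{NP}AF'_p$ (normal expansion) iff $AR\subseteq AR'$, $Attacks\subseteq Attacks'$, every $(a,b)\in Attacks'\setminus Attacks$ has $a\in AR'\setminus AR$ or $b\in AR'\setminus AR$, $Prefs\subseteq Prefs'$, and every $(a\succeq b)\in Prefs'\setminus Prefs$ has $a\in AR'\setminus AR$ or $b\in AR'\setminus AR$. An attack sequence in $(AR,Attacks)$ is $\langle a_1,\dots,a_n\rangle$ of pairwise distinct arguments with $(a_i,a_{i+1})\in Attacks$; $b$ is reachable from $a$ iff such a sequence has $a_1=a$, $a_n=b$. An attack cycle is $\langle a_1,\dots,a_n\rangle$ with $(a_i,a_{i+1})\in Attacks$, $a_1=a_n$ and $a_1,\dots,a_{n-1}$ pairwise distinct; $\mathcal C(AR,Attacks)$ is the set of attack cycles. $AF_p\preceq_{RMP}AF'_p$ (rational man's expansion)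 iff $AF_p\preceq_{NP}AF'_p$, $\mathcal C(AR',Attacks')=\mathcal C(AR,Attacks)$, and for all $a\in AR$, $b\in AR'\setminus AR$ with $b$ reachable from $a$ in $(AR',Attacks')$, $a$ occurs in no attack cycle of $(AR',Attacks')$. *)

theory Defs
  imports Main
begin

text \<open>A pair (b,a) in Attacks means b attacks a; a pair (a,b) in Prefs means a is
  at least as preferred as b.\<close>

definition is_paf :: "'a set \<Rightarrow> ('a \<times> 'a) set \<Rightarrow> ('a \<times> 'a) set \<Rightarrow> bool" where
  "is_paf AR Att Prefs \<longleftrightarrow> finite AR \<and> Att \<subseteq> AR \<times> AR \<and> Prefs \<subseteq> AR \<times> AR
     \<and> partial_order_on AR Prefs"

definition tau_preferred :: "'a set \<Rightarrow> ('a \<times> 'a) set \<Rightarrow> ('a \<times> 'a) set \<Rightarrow> 'a set" where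
  "tau_preferred AR Att Prefs = {a \<in> AR. \<forall>b \<in> AR. (b, a) \<in> Att \<longrightarrow> (a, b) \<in> Prefs}"

definition normal_exp ::
  "'a set \<Rightarrow> ('a \<times> 'a) set \<Rightarrow> ('a \<times> 'a) set \<Rightarrow> 'a set \<Rightarrow> ('a \<times> 'a) set \<Rightarrow> ('a \<times> 'a) set \<Rightarrow> bool" where
  "normal_exp AR Att Prefs AR' Att' Prefs' \<longleftrightarrow>
     AR \<subseteq> AR' \<and> Att \<subseteq> Att' \<and>
     (\<forall>(a, b) \<in> Att' - Att. a \<in> AR' - AR \<or> b \<in> AR' - AR) \<and>
     Prefs \<subseteq> Prefs' \<and>
     (\<forall>(a, b) \<in> Prefs' - Prefs. a \<in> AR' - AR \<or> b \<in> AR' - AR)"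

definition attack_seq :: "'a set \<Rightarrow> ('a \<times> 'a) set \<Rightarrow> 'a list \<Rightarrow> bool" where
  "attack_seq AR Att s \<longleftrightarrow> s \<noteq> [] \<and> set s \<subseteq> AR \<and> distinct s \<and>
     (\<forall>i. Suc i < length s \<longrightarrow> (s ! i, s ! Suc i) \<in> Att)"

definition reachable :: "'a set \<Rightarrow> ('a \<times> 'a) set \<Rightarrow> 'a \<Rightarrow> 'a \<Rightarrow> bool" where
  "reachable AR Att a b \<longleftrightarrow> (\<exists>s. attack_seq AR Att s \<and> hd s = a \<and> last s = b)"

definition attack_cycles :: "'a set \<Rightarrow> ('a \<times> 'a) set \<Rightarrow> 'a list set" where
  "attack_cycles AR Att = {c. 2 \<le> length c \<and> set c \<subseteq> AR \<and> hd c = last c \<and>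
     distinct (butlast c) \<and> (\<forall>i. Suc i < length c \<longrightarrow> (c ! i, c ! Suc i) \<in> Att)}"

definition rm_exp ::
  "'a set \<Rightarrow> ('a \<times> 'a) set \<Rightarrow> ('a \<times> 'a) set \<Rightarrow> 'a set \<Rightarrow> ('a \<times> 'a) set \<Rightarrow> ('a \<times> 'a) set \<Rightarrow> bool" where
  "rm_exp AR Att Prefs AR' Att' Prefs' \<longleftrightarrow>
     normal_exp AR Att Prefs AR' Att' Prefs' \<and>
     attack_cycles AR' Att' = attack_cycles AR Att \<and>
     (\<forall>a \<in> AR. \<forall>b \<in> AR' - AR. reachable AR' Att' a b \<longrightarrow>
        (\<forall>c \<in> attack_cycles AR' Att'. a \<notin> set c))"

end

theory Submission
  imports Defs
begin

text \<open>Take AR = {0, 2} with no attacks and the trivial preference order, so both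
  arguments are accepted.  Expand by a single new argument 1 with 0 attacking 1
  and 1 attacking 2.  The expanded attack graph is still acyclic, so this is a
  rational man's expansion; but now 2 is attacked by an argument it is not
  preferred to, and the accepted set shrinks to {0}, which lies inside AR without
  being the old accepted set.\<close>

lemma attack_chain_in_trancl:
  assumes "\<forall>i. Suc i < length c \<longrightarrow> (c ! i, c ! Suc i) \<in> Att"
  shows "0 < k \<Longrightarrow> k < length c \<Longrightarrow> (c ! 0, c ! k) \<in> Att\<^sup>+"
proof (induction k)
  case 0
  then show ?case by simp
next
  case (Suc k)
  have step: "(c ! k, c ! Suc k) \<in> Att"
    using assms Suc.prems by blast
  show ?case
  proof (cases k)
    case 0
    then show ?thesis using step by simp
  next
    case (Suc _)
    then have "(c ! 0, c ! k) \<in> Att\<^sup>+"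
      using Suc.IH Suc.prems by simp
    then show ?thesis using step by (rule trancl_into_trancl)
  qed
qed

lemma attack_cycles_empty_if_acyclic:
  assumes "acyclic Att"
  shows "attack_cycles AR Att = {}"
proof (rule ccontr)
  assume "attack_cycles AR Att \<noteq> {}"
  then obtain c where len: "2 \<le> length c" and closed: "hd c = last c"
    and chain: "\<forall>i. Suc i < length c \<longrightarrow> (c ! i, c ! Suc i) \<in> Att"
    by (auto simp: attack_cycles_def)
  have "(c ! 0, c ! (length c - 1)) \<in> Att\<^sup>+"
    using attack_chain_in_trancl[OF chain, of "length c - 1"] len by simp
  moreover have "c ! 0 = c ! (length c - 1)"
    using closed len by (metis hd_conv_nth last_conv_nth list.size(3) not_numeral_le_zero)
  ultimately show False
    using assms by (simp add: acyclic_def)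
qed

lemma acyclic_if_increasing:
  fixes Att :: "('a::order \<times> 'a) set"
  assumes "Att \<subseteq> {(a, b). a < b}"
  shows "acyclic Att"
proof (rule acyclicI, intro allI notI)
  fix x
  have "a < b" if "(a, b) \<in> Att\<^sup>+" for a b
    using that assms by (induction rule: trancl_induct) auto
  then show "(x, x) \<in> Att\<^sup>+ \<Longrightarrow> False"
    by blast
qed

lemma rm_exp_if_acyclic:
  assumes "normal_exp AR Att Prefs AR' Att' Prefs'"
    and "acyclic Att" and "acyclic Att'"
  shows "rm_exp AR Att Prefs AR' Att' Prefs'"
  using assms by (simp add: rm_exp_def attack_cycles_empty_if_acyclic)

lemma is_paf_Id_on:
  assumes "finite AR" and "Att \<subseteq> AR \<times> AR"
  shows "is_paf AR Att (Id_on AR)"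
  using assms
  by (auto simp: is_paf_def partial_order_on_def preorder_on_def refl_on_def trans_def
      antisym_def)

lemma normal_exp_Id_on:
  assumes "AR \<subseteq> AR'" and "Att \<subseteq> Att'"
    and "\<forall>(a, b) \<in> Att' - Att. a \<in> AR' - AR \<or> b \<in> AR' - AR"
  shows "normal_exp AR Att (Id_on AR) AR' Att' (Id_on AR')"
  using assms by (auto simp: normal_exp_def)

lemma tau_preferred_Id_on:
  "tau_preferred AR Att (Id_on AR) = {a \<in> AR. \<forall>b \<in> AR. (b, a) \<in> Att \<longrightarrow> b = a}"
  by (auto simp: tau_preferred_def)

theorem proposition50:
  shows "\<exists>(AR :: nat set) Att Prefs AR' Att' Prefs'.
    is_paf AR Att Prefs \<and> is_paf AR' Att' Prefs' \<and>
    rm_exp AR Att Prefs AR' Att' Prefs' \<and>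
    tau_preferred AR' Att' Prefs' \<subseteq> AR \<and>
    tau_preferred AR' Att' Prefs' \<noteq> tau_preferred AR Att Prefs"
proof (intro exI conjI)
  let ?AR = "{0, 2} :: nat set" and ?AR' = "{0, 1, 2} :: nat set"
  let ?Att' = "{(0, 1), (1, 2)} :: (nat \<times> nat) set"
  show "is_paf ?AR {} (Id_on ?AR)" and "is_paf ?AR' ?Att' (Id_on ?AR')"
    by (auto intro: is_paf_Id_on)
  have "acyclic ?Att'"
    by (rule acyclic_if_increasing) auto
  then show "rm_exp ?AR {} (Id_on ?AR) ?AR' ?Att' (Id_on ?AR')"
    by (auto intro!: rm_exp_if_acyclic normal_exp_Id_on)
  have accepted': "tau_preferred ?AR' ?Att' (Id_on ?AR') = {0}"
    by (auto simp: tau_preferred_Id_on)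
  then show "tau_preferred ?AR' ?Att' (Id_on ?AR') \<subseteq> ?AR"
    by simp
  have accepted: "tau_preferred ?AR {} (Id_on ?AR) = ?AR"
    by (auto simp: tau_preferred_Id_on)
  show "tau_preferred ?AR' ?Att' (Id_on ?AR') \<noteq> tau_preferred ?AR {} (Id_on ?AR)"
    unfolding accepted accepted' by simp
qed

end
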